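(* Let $f:\mathbb{R}^n\to\mathbb{R}$ be convex and continuously differentiable, with $|f(x)-f(y)|\le L_0\|x-y\|$ and $\|\nabla f(x)-\nabla f(y)\|\le L_1\|x-y\|$ for all $x,y$. Let the noisy objective be $\tilde f(x;\xi)=f(x)[1+\nu(x;\xi)]$, where $\nu$ is i.i.d. with $\mathbb{E}[\nu]=0$ and variance $\sigma_r^2=\mathrm{Var}(\nu)>0$, $\mathbb{E}[\frac{1}{1+\nu}]\le b$, and the support of $\nu$ is contained in $[-a,a]$ for some $a<1$. Let $u\in\mathbb{R}^n$ be a standard Gaussian vector and $u,\xi_1,\xi_2$ independent, and for $\mu>0$ define $$\mathcal{E}(\mu)=\left\|\frac{\tilde f(x+\mu u;\xi_1)-\tilde f(x;\xi_2)}{\mu}u-\langle\nabla f(x),u\rangle u\right\|^2 .$$ Let $x\in\mathbb{R}^n$ with $f(x)\ne0$, and choose $$\mu^*=C_4\sqrt{|f(x)|},\qquad C_4=\left[\frac{16\sigma_r^2 n}{L_1^2(1+3\sigma_r^2)(n+6)^3}\right]^{1/4}.$$ Then $$\mathbb{E}_{u,\xi_1,\xi_2}[\mathcal{E}(\mu^* )]\le 2L_1\sigma_r\sqrt{(1+3\sigma_r^2)n(n+6)^3}\,|f(x)|+3L_0^2\sigma_r^2(n+4)^2.$$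
   Context: $\|\cdot\|$ is the Euclidean norm, $\langle\cdot,\cdot\rangle$ the Euclidean inner product; "standard Gaussian" means mean $0$ and covariance $I_n$. The noise values in the two evaluations are independent copies of $\nu$. *)

theory Defs
  imports "HOL-Probability.Probability"
begin

definition std_gaussian :: "'a::euclidean_space measure" where
  "std_gaussian = density lborel
     (\<lambda>x. ennreal ((2 * pi) powr (- real DIM('a) / 2) * exp (- (norm x)\<^sup>2 / 2)))"

definition est_err :: "('a::euclidean_space \<Rightarrow> real) \<Rightarrow> ('a \<Rightarrow> 'a) \<Rightarrow> 'a \<Rightarrow> real
    \<Rightarrow> 'a \<Rightarrow> real \<Rightarrow> real \<Rightarrow> real" where
  "est_err f g x \<mu> u v1 v2 =
     (norm (((f (x + \<mu> *\<^sub>R u) * (1 + v1) - f x * (1 + v2)) / \<mu>) *\<^sub>R u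
            - (g x \<bullet> u) *\<^sub>R u))\<^sup>2"

end

theory Submission
  imports Defs
begin

text \<open>Averaging over the two noise values first, the squared error at a direction \<open>u\<close> is
  \<open>(A\<^sup>2 + (P\<^sup>2 + Q\<^sup>2) \<sigma>\<^sup>2) \<parallel>u\<parallel>\<^sup>2\<close>, where \<open>A\<close> is the Taylor remainder of the finite difference
  (so \<open>|A| \<le> L\<^sub>1 \<mu> \<parallel>u\<parallel>\<^sup>2 / 2\<close>) and \<open>P = f(x + \<mu>u)/\<mu>\<close>, \<open>Q = f(x)/\<mu>\<close>, so that by the Lipschitz bound
  \<open>P\<^sup>2 + Q\<^sup>2 \<le> 5/2 f(x)\<^sup>2/\<mu>\<^sup>2 + 3 L\<^sub>0\<^sup>2 \<parallel>u\<parallel>\<^sup>2\<close>.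
  The Gaussian moments \<open>E\<parallel>u\<parallel>\<^sup>2 = n\<close>, \<open>E\<parallel>u\<parallel>\<^sup>4 = n(n+2)\<close>, \<open>E\<parallel>u\<parallel>\<^sup>6 = n(n+2)(n+4)\<close> then bound the
  expected error by \<open>L\<^sub>1\<^sup>2\<mu>\<^sup>2/4 \<cdot> n(n+2)(n+4) + 3L\<^sub>0\<^sup>2\<sigma>\<^sup>2 n(n+2) + 5/2 \<cdot> \<sigma>\<^sup>2 f(x)\<^sup>2 n/\<mu>\<^sup>2\<close>,
  and \<open>\<mu>\<^sup>*\<close> balances the first and the last term.\<close>

lemma nn_integral_std_normal_shifted_square_power:
  fixes s :: real
  assumes "0 \<le> s"
  shows "(\<integral>\<^sup>+y. ennreal (std_normal_density y * (s + y\<^sup>2) ^ k) \<partial>lborel)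
       = ennreal (\<Sum>j\<le>k. real (k choose j) * (fact (2*j) / (2^j * fact j)) * s ^ (k - j))"
proof -
  have expand: "std_normal_density y * (s + y\<^sup>2) ^ k
      = (\<Sum>j\<le>k. real (k choose j) * s ^ (k - j) * (std_normal_density y * y ^ (2*j)))" for y
  proof -
    have "(s + y\<^sup>2) ^ k = (\<Sum>j\<le>k. real (k choose j) * y ^ (2*j) * s ^ (k - j))"
      using binomial_ring[of "y\<^sup>2" s k] by (simp add: add.commute power_mult)
    then show ?thesis by (simp add: sum_distrib_left mult_ac)
  qed
  have "has_bochner_integral lborel (\<lambda>y. std_normal_density y * (s + y\<^sup>2) ^ k)
      (\<Sum>j\<le>k. real (k choose j) * s ^ (k - j) * (fact (2*j) / (2^j * fact j)))"
    unfolding expand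
    by (intro has_bochner_integral_sum has_bochner_integral_mult_right std_normal_moment_even)
  then show ?thesis
    using assms by (subst nn_integral_eq_integral)
      (auto simp: has_bochner_integral_iff mult_ac)
qed

definition gaussian_sq_moment :: "nat \<Rightarrow> 'i set \<Rightarrow> ennreal" where
  "gaussian_sq_moment k I =
     (\<integral>\<^sup>+\<xi>. ennreal ((\<Sum>i\<in>I. (\<xi> i)\<^sup>2) ^ k * (\<Prod>i\<in>I. std_normal_density (\<xi> i)))
       \<partial>(\<Pi>\<^sub>M i\<in>I. lborel))"

lemma gaussian_sq_moment_insert:
  assumes "finite I" "i \<notin> I"
  shows "gaussian_sq_moment k (insert i I)
       = (\<Sum>j\<le>k. ennreal (real (k choose j) * (fact (2*j) / (2^j * fact j)))
                   * gaussian_sq_moment (k - j) I)"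
proof -
  interpret product_sigma_finite "\<lambda>_. lborel"
    by (simp add: product_sigma_finite_def sigma_finite_lborel)
  define S where "S \<xi> = (\<Sum>i\<in>I. (\<xi> i)\<^sup>2)" for \<xi> :: "'a \<Rightarrow> real"
  define P where "P \<xi> = (\<Prod>i\<in>I. std_normal_density (\<xi> i))" for \<xi> :: "'a \<Rightarrow> real"
  define c where "c j = real (k choose j) * (fact (2*j) / (2^j * fact j))" for j
  have [measurable]: "S \<in> borel_measurable (\<Pi>\<^sub>M i\<in>I. lborel)" "P \<in> borel_measurable (\<Pi>\<^sub>M i\<in>I. lborel)"
    unfolding S_def P_def by measurable
  have nonneg: "0 \<le> S \<xi>" "0 \<le> P \<xi>" "0 \<le> c j" for \<xi> j
    by (auto simp: S_def P_def c_def sum_nonneg prod_nonneg)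
  have upd: "S (\<xi>(i := y)) = S \<xi>" "P (\<xi>(i := y)) = P \<xi>" for \<xi> y
    unfolding S_def P_def using assms(2) by (auto intro!: sum.cong prod.cong)
  have insert_upd: "(\<Sum>l\<in>insert i I. ((\<xi>(i := y)) l)\<^sup>2) ^ k
        * (\<Prod>l\<in>insert i I. std_normal_density ((\<xi>(i := y)) l))
      = P \<xi> * (std_normal_density y * (S \<xi> + y\<^sup>2) ^ k)" for \<xi> y
    using assms upd[of \<xi> y] by (simp add: S_def P_def add.commute mult_ac)
  have "gaussian_sq_moment k (insert i I)
      = (\<integral>\<^sup>+\<xi>. (\<integral>\<^sup>+y. ennreal (P \<xi>) * ennreal (std_normal_density y * (S \<xi> + y\<^sup>2) ^ k) \<partial>lborel)
          \<partial>(\<Pi>\<^sub>M i\<in>I. lborel))"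
    unfolding gaussian_sq_moment_def
    by (subst product_nn_integral_insert[OF assms], measurable)
       (simp only: insert_upd ennreal_mult'[OF nonneg(2)])
  also have "\<dots> = (\<integral>\<^sup>+\<xi>. (\<Sum>j\<le>k. ennreal (c j) * ennreal (S \<xi> ^ (k - j) * P \<xi>))
          \<partial>(\<Pi>\<^sub>M i\<in>I. lborel))"
  proof (rule nn_integral_cong)
    fix \<xi> :: "'a \<Rightarrow> real"
    have "(\<integral>\<^sup>+y. ennreal (P \<xi>) * ennreal (std_normal_density y * (S \<xi> + y\<^sup>2) ^ k) \<partial>lborel)
        = ennreal (P \<xi>) * ennreal (\<Sum>j\<le>k. c j * S \<xi> ^ (k - j))"
      by (simp add: nn_integral_cmult nn_integral_std_normal_shifted_square_power nonneg c_def)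
    also have "\<dots> = ennreal (\<Sum>j\<le>k. c j * (S \<xi> ^ (k - j) * P \<xi>))"
      by (simp add: ennreal_mult'[symmetric] nonneg sum_distrib_left mult_ac)
    also have "\<dots> = (\<Sum>j\<le>k. ennreal (c j) * ennreal (S \<xi> ^ (k - j) * P \<xi>))"
      by (simp add: sum_ennreal[symmetric] ennreal_mult nonneg)
    finally show "(\<integral>\<^sup>+y. ennreal (P \<xi>) * ennreal (std_normal_density y * (S \<xi> + y\<^sup>2) ^ k) \<partial>lborel)
        = (\<Sum>j\<le>k. ennreal (c j) * ennreal (S \<xi> ^ (k - j) * P \<xi>))" .
  qed
  also have "\<dots> = (\<Sum>j\<le>k. ennreal (c j) * gaussian_sq_moment (k - j) I)"
    unfolding gaussian_sq_moment_def S_def[symmetric] P_def[symmetric]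
    by (simp add: nn_integral_sum nn_integral_cmult)
  finally show ?thesis unfolding c_def .
qed

text \<open>The identity holds for every \<open>k\<close>; it is only checked for the moments used here.\<close>

lemma gaussian_moment_recurrence:
  fixes n :: real
  assumes "k \<le> 3"
  shows "(\<Sum>j\<le>k. real (k choose j) * (fact (2*j) / (2^j * fact j)) * (\<Prod>l<k-j. n + 2 * real l))
       = (\<Prod>l<k. n + 1 + 2 * real l)"
proof -
  have "k \<in> {0,1,2,3}" using assms by auto
  then show ?thesis
    by (auto simp: numeral_eq_Suc fact_numeral algebra_simps)
qed

lemma gaussian_sq_moment_eq:
  assumes "finite I" "k \<le> 3"
  shows "gaussian_sq_moment k I = ennreal (\<Prod>j<k. real (card I) + 2 * real j)"
  using assms
proof (induction I arbitrary: k rule: finite_induct)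
  case empty
  have "(\<Prod>j<k. real (card {}) + 2 * real j) = (if k = 0 then 1 else 0)"
    by (auto intro!: prod_zero bexI[of _ 0])
  then show ?case
    by (simp add: gaussian_sq_moment_def PiM_empty)
next
  case (insert i I)
  let ?c = "\<lambda>j. real (k choose j) * (fact (2*j) / (2^j * fact j))"
  have "gaussian_sq_moment k (insert i I) = (\<Sum>j\<le>k. ennreal (?c j) * gaussian_sq_moment (k - j) I)"
    by (rule gaussian_sq_moment_insert[OF insert.hyps])
  also have "\<dots> = (\<Sum>j\<le>k. ennreal (?c j) * ennreal (\<Prod>l<k-j. real (card I) + 2 * real l))"
    using insert.prems by (intro sum.cong refl) (simp add: insert.IH)
  also have "\<dots> = ennreal (\<Sum>j\<le>k. ?c j * (\<Prod>l<k-j. real (card I) + 2 * real l))"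
    by (simp add: ennreal_mult'[symmetric] sum_ennreal prod_nonneg)
  also have "\<dots> = ennreal (\<Prod>l<k. real (card (insert i I)) + 2 * real l)"
    using insert by (subst gaussian_moment_recurrence) (simp_all add: add_ac)
  finally show ?case .
qed

lemma prod_std_normal_density:
  assumes "finite I"
  shows "(\<Prod>i\<in>I. std_normal_density (\<xi> i))
       = (2 * pi) powr (- real (card I) / 2) * exp (- (\<Sum>i\<in>I. (\<xi> i)\<^sup>2) / 2)"
proof -
  have "(2 * pi) powr (- real (card I) / 2) = 1 / ((2 * pi) powr (1 / 2)) powr real (card I)"
    by (simp add: powr_minus_divide powr_powr)
  also have "\<dots> = (1 / sqrt (2 * pi)) ^ card I"
    by (simp add: powr_half_sqrt powr_realpow power_one_over)
  finally have "(2 * pi) powr (- real (card I) / 2) = (1 / sqrt (2 * pi)) ^ card I" .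
  moreover have "exp (- (\<Sum>i\<in>I. (\<xi> i)\<^sup>2) / 2) = (\<Prod>i\<in>I. exp (- (\<xi> i)\<^sup>2 / 2))"
    using assms by (simp add: exp_sum[symmetric] sum_negf sum_divide_distrib)
  ultimately show ?thesis
    by (simp add: std_normal_density_def prod_dividef power_one_over)
qed

lemma norm_sum_Basis_squared:
  "(norm (\<Sum>b\<in>Basis. \<xi> b *\<^sub>R b :: 'a::euclidean_space))\<^sup>2 = (\<Sum>b\<in>Basis. (\<xi> b)\<^sup>2)"
  by (subst norm_sum_Pythagorean) (auto simp: pairwise_def orthogonal_def inner_Basis)

lemma nn_integral_std_gaussian_norm_power:
  "(\<integral>\<^sup>+u. ennreal (norm u ^ (2 * k)) \<partial>(std_gaussian :: 'a::euclidean_space measure))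
     = gaussian_sq_moment k (Basis :: 'a set)"
proof -
  define T where "T \<xi> = (\<Sum>b\<in>Basis. \<xi> b *\<^sub>R b :: 'a)" for \<xi>
  define d where "d u = (2 * pi) powr (- real DIM('a) / 2) * exp (- (norm u)\<^sup>2 / 2)" for u :: 'a
  have [measurable]: "T \<in> borel_measurable (\<Pi>\<^sub>M b\<in>Basis. lborel)" "d \<in> borel_measurable borel"
    unfolding T_def d_def by measurable
  have "(\<integral>\<^sup>+u. ennreal (norm u ^ (2 * k)) \<partial>(std_gaussian :: 'a measure))
      = (\<integral>\<^sup>+u. ennreal (d u) * ennreal (norm u ^ (2 * k)) \<partial>lborel)"
    unfolding std_gaussian_def d_def by (rule nn_integral_density) measurable
  also have "\<dots> = (\<integral>\<^sup>+\<xi>. ennreal (d (T \<xi>)) * ennreal (norm (T \<xi>) ^ (2 * k)) \<partial>(\<Pi>\<^sub>M b\<in>Basis. lborel))"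
    unfolding lborel_eq[where 'a='a] T_def[symmetric] by (simp add: nn_integral_distr)
  also have "\<dots> = gaussian_sq_moment k (Basis :: 'a set)"
    unfolding gaussian_sq_moment_def d_def T_def power_mult norm_sum_Basis_squared
    by (simp add: prod_std_normal_density ennreal_mult[symmetric] sum_nonneg mult.commute)
  finally show ?thesis .
qed

lemma sets_std_gaussian [measurable_cong]: "sets std_gaussian = sets borel"
  by (simp add: std_gaussian_def)

lemma nn_integral_std_gaussian_norm_poly:
  assumes "K \<subseteq> {..3}" "\<And>k. k \<in> K \<Longrightarrow> 0 \<le> c k"
  shows "(\<integral>\<^sup>+u. ennreal (\<Sum>k\<in>K. c k * norm u ^ (2 * k)) \<partial>(std_gaussian :: 'a::euclidean_space measure))
       = ennreal (\<Sum>k\<in>K. c k * (\<Prod>j<k. real DIM('a) + 2 * real j))"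
proof -
  have "finite K" using assms(1) finite_subset by blast
  have "(\<integral>\<^sup>+u. ennreal (\<Sum>k\<in>K. c k * norm u ^ (2 * k)) \<partial>(std_gaussian :: 'a measure))
      = (\<integral>\<^sup>+u. (\<Sum>k\<in>K. ennreal (c k) * ennreal (norm u ^ (2 * k))) \<partial>(std_gaussian :: 'a measure))"
    using assms(2) by (simp add: ennreal_mult'[symmetric] sum_ennreal)
  also have "\<dots> = (\<Sum>k\<in>K. ennreal (c k) * (\<integral>\<^sup>+u. ennreal (norm u ^ (2 * k)) \<partial>(std_gaussian :: 'a measure)))"
    by (simp add: nn_integral_sum nn_integral_cmult)
  also have "\<dots> = (\<Sum>k\<in>K. ennreal (c k) * ennreal (\<Prod>j<k. real DIM('a) + 2 * real j))"
    using assms(1) by (intro sum.cong refl)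
      (auto simp: nn_integral_std_gaussian_norm_power gaussian_sq_moment_eq)
  also have "\<dots> = ennreal (\<Sum>k\<in>K. c k * (\<Prod>j<k. real DIM('a) + 2 * real j))"
    using assms(2) by (simp add: ennreal_mult'[symmetric] sum_ennreal prod_nonneg)
  finally show ?thesis .
qed

lemma variance_imp_square_integrable:
  fixes D :: "real measure"
  assumes "prob_space.expectation D (\<lambda>v. v) = 0" "prob_space.variance D (\<lambda>v. v) = \<sigma>\<^sup>2" "\<sigma> \<noteq> 0"
  shows "integrable D (\<lambda>v. v\<^sup>2)" "prob_space.expectation D (\<lambda>v. v\<^sup>2) = \<sigma>\<^sup>2"
proof -
  show second_moment: "prob_space.expectation D (\<lambda>v. v\<^sup>2) = \<sigma>\<^sup>2"
    using assms(1,2) by simp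
  txt \<open>A non-integrable function has Bochner integral \<open>0\<close>.\<close>
  then show "integrable D (\<lambda>v. v\<^sup>2)"
    using assms(3) not_integrable_integral_eq by fastforce
qed

lemma nn_integral_centered_affine_square:
  fixes D :: "real measure"
  assumes "prob_space D" "sets D = sets borel" "integrable D (\<lambda>v. v\<^sup>2)"
    and "prob_space.expectation D (\<lambda>v. v) = 0"
    and "prob_space.expectation D (\<lambda>v. v\<^sup>2) = \<sigma>\<^sup>2"
    and "0 \<le> e"
  shows "(\<integral>\<^sup>+v. ennreal ((c + d * v)\<^sup>2 + e) \<partial>D) = ennreal (c\<^sup>2 + d\<^sup>2 * \<sigma>\<^sup>2 + e)"
proof -
  interpret prob_space D by fact
  have [measurable_cong]: "sets D = sets borel" by fact
  have "integrable D (\<lambda>v. v)"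
    by (rule square_integrable_imp_integrable) (use assms(3) in simp_all)
  then have "has_bochner_integral D (\<lambda>v. (c\<^sup>2 + e) + (2 * c * d) * v + d\<^sup>2 * v\<^sup>2)
      ((c\<^sup>2 + e) + (2 * c * d) * 0 + d\<^sup>2 * \<sigma>\<^sup>2)"
    using assms(3-5) prob_space
    by (intro has_bochner_integral_add has_bochner_integral_mult_right)
       (auto simp: has_bochner_integral_iff)
  moreover have "(c + d * v)\<^sup>2 + e = (c\<^sup>2 + e) + (2 * c * d) * v + d\<^sup>2 * v\<^sup>2" for v
    by (simp add: power2_eq_square algebra_simps)
  ultimately have "has_bochner_integral D (\<lambda>v. (c + d * v)\<^sup>2 + e) (c\<^sup>2 + d\<^sup>2 * \<sigma>\<^sup>2 + e)"
    by (simp add: algebra_simps)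
  then show ?thesis
    using assms(6) by (subst nn_integral_eq_integral) (auto simp: has_bochner_integral_iff)
qed

lemma nn_integral_two_centered_noises_square:
  fixes D :: "real measure"
  assumes "prob_space D" "sets D = sets borel" "integrable D (\<lambda>v. v\<^sup>2)"
    and "prob_space.expectation D (\<lambda>v. v) = 0"
    and "prob_space.expectation D (\<lambda>v. v\<^sup>2) = \<sigma>\<^sup>2"
  shows "(\<integral>\<^sup>+(v1, v2). ennreal ((a + p * v1 + q * v2)\<^sup>2) \<partial>(D \<Otimes>\<^sub>M D))
       = ennreal (a\<^sup>2 + (p\<^sup>2 + q\<^sup>2) * \<sigma>\<^sup>2)"
proof -
  interpret prob_space D by fact
  have [measurable_cong]: "sets D = sets borel" by fact
  have "(\<integral>\<^sup>+(v1, v2). ennreal ((a + p * v1 + q * v2)\<^sup>2) \<partial>(D \<Otimes>\<^sub>M D))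
      = (\<integral>\<^sup>+v1. (\<integral>\<^sup>+v2. ennreal (((a + p * v1) + q * v2)\<^sup>2 + 0) \<partial>D) \<partial>D)"
    by (subst nn_integral_fst[symmetric]) (simp_all add: case_prod_beta)
  also have "\<dots> = (\<integral>\<^sup>+v1. ennreal ((a + p * v1)\<^sup>2 + q\<^sup>2 * \<sigma>\<^sup>2 + 0) \<partial>D)"
    by (intro nn_integral_cong nn_integral_centered_affine_square[OF assms]) simp
  also have "\<dots> = (\<integral>\<^sup>+v1. ennreal ((a + p * v1)\<^sup>2 + q\<^sup>2 * \<sigma>\<^sup>2) \<partial>D)"
    by simp
  also have "\<dots> = ennreal (a\<^sup>2 + (p\<^sup>2 + q\<^sup>2) * \<sigma>\<^sup>2)"
    by (subst nn_integral_centered_affine_square[OF assms]) (simp_all add: algebra_simps)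
  finally show ?thesis .
qed

lemma est_err_noise_expectation:
  fixes D :: "real measure"
  assumes "prob_space D" "sets D = sets borel" "integrable D (\<lambda>v. v\<^sup>2)"
    and "prob_space.expectation D (\<lambda>v. v) = 0"
    and "prob_space.expectation D (\<lambda>v. v\<^sup>2) = \<sigma>\<^sup>2"
    and "\<mu> \<noteq> 0"
  shows "(\<integral>\<^sup>+(v1, v2). ennreal (est_err f g x \<mu> u v1 v2) \<partial>(D \<Otimes>\<^sub>M D))
       = ennreal ((((f (x + \<mu> *\<^sub>R u) - f x) / \<mu> - g x \<bullet> u)\<^sup>2
                   + ((f (x + \<mu> *\<^sub>R u))\<^sup>2 + (f x)\<^sup>2) / \<mu>\<^sup>2 * \<sigma>\<^sup>2) * (norm u)\<^sup>2)"
proof -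
  have [measurable_cong]: "sets D = sets borel" by fact
  define a where "a = (f (x + \<mu> *\<^sub>R u) - f x) / \<mu> - g x \<bullet> u"
  define p where "p = f (x + \<mu> *\<^sub>R u) / \<mu>"
  define q where "q = - f x / \<mu>"
  have "(f (x + \<mu> *\<^sub>R u) * (1 + v1) - f x * (1 + v2)) / \<mu> - g x \<bullet> u = a + p * v1 + q * v2" for v1 v2
    unfolding a_def p_def q_def using assms(6) by (simp add: field_simps)
  then have err: "est_err f g x \<mu> u v1 v2 = (a + p * v1 + q * v2)\<^sup>2 * (norm u)\<^sup>2" for v1 v2
    unfolding est_err_def by (simp only: scaleR_diff_left[symmetric] norm_scaleR power_mult_distrib real_norm_def power2_abs)
  have "(\<integral>\<^sup>+(v1, v2). ennreal (est_err f g x \<mu> u v1 v2) \<partial>(D \<Otimes>\<^sub>M D))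
      = (\<integral>\<^sup>+(v1, v2). ennreal ((a + p * v1 + q * v2)\<^sup>2) \<partial>(D \<Otimes>\<^sub>M D)) * ennreal ((norm u)\<^sup>2)"
    unfolding err by (subst nn_integral_multc[symmetric]) (auto simp: ennreal_mult intro!: nn_integral_cong split: prod.splits)
  also have "\<dots> = ennreal ((a\<^sup>2 + (p\<^sup>2 + q\<^sup>2) * \<sigma>\<^sup>2) * (norm u)\<^sup>2)"
    by (simp add: nn_integral_two_centered_noises_square[OF assms(1-5)] ennreal_mult)
  finally show ?thesis
    unfolding a_def p_def q_def by (simp add: power_divide add_divide_distrib)
qed

lemma lipschitz_gradient_taylor_bound:
  fixes f :: "'a::real_inner \<Rightarrow> real"
  assumes grad: "\<And>y. (f has_derivative (\<lambda>h. g y \<bullet> h)) (at y)"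
    and lip1: "\<And>y z. norm (g y - g z) \<le> L1 * norm (y - z)"
  shows "\<bar>f (x + h) - f x - g x \<bullet> h\<bar> \<le> L1 / 2 * (norm h)\<^sup>2"
proof -
  let ?c = "g x \<bullet> h" and ?q = "L1 / 2 * (norm h)\<^sup>2"
  have deriv: "((\<lambda>t. f (x + t *\<^sub>R h)) has_real_derivative g (x + t *\<^sub>R h) \<bullet> h) (at t)" for t
  proof -
    have "((\<lambda>t. x + t *\<^sub>R h) has_derivative (\<lambda>s. s *\<^sub>R h)) (at t)"
      by (auto intro!: derivative_eq_intros)
    moreover have "(\<lambda>s. g (x + t *\<^sub>R h) \<bullet> (s *\<^sub>R h)) = (*) (g (x + t *\<^sub>R h) \<bullet> h)"
      by (simp add: fun_eq_iff)
    ultimately show ?thesis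
      using has_derivative_compose[OF _ grad] by (metis has_field_derivative_def)
  qed
  have slope: "\<bar>g (x + t *\<^sub>R h) \<bullet> h - ?c\<bar> \<le> 2 * t * ?q" if "0 \<le> t" for t
  proof -
    have "\<bar>(g (x + t *\<^sub>R h) - g x) \<bullet> h\<bar> \<le> norm (g (x + t *\<^sub>R h) - g x) * norm h"
      by (rule Cauchy_Schwarz_ineq2)
    also have "\<dots> \<le> L1 * norm (t *\<^sub>R h) * norm h"
      using lip1[of "x + t *\<^sub>R h" x] by (simp add: mult_right_mono)
    finally show ?thesis
      using that by (simp add: inner_diff_left power2_eq_square mult_ac)
  qed
  have upper: "f (x + h) - ?c - ?q \<le> f x"
    using DERIV_nonpos_imp_nonincreasing[of 0 1 "\<lambda>t. f (x + t *\<^sub>R h) - t * ?c - t\<^sup>2 * ?q"]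
      deriv slope
    by (fastforce intro!: derivative_eq_intros simp: abs_le_iff)
  have lower: "f x \<le> f (x + h) - ?c + ?q"
    using DERIV_nonneg_imp_nondecreasing[of 0 1 "\<lambda>t. f (x + t *\<^sub>R h) - t * ?c + t\<^sup>2 * ?q"]
      deriv slope
    by (fastforce intro!: derivative_eq_intros simp: abs_le_iff)
  show ?thesis
    using upper lower by (simp only: abs_le_iff) linarith
qed

lemma square_add_le: "((a::real) + d)\<^sup>2 \<le> 3 / 2 * a\<^sup>2 + 3 * d\<^sup>2"
proof -
  have "0 \<le> (a - 2 * d)\<^sup>2 / 2" by simp
  then show ?thesis by (simp add: power2_eq_square algebra_simps)
qed

lemma difference_quotient_error_bound:
  fixes f :: "'a::real_inner \<Rightarrow> real"
  assumes grad: "\<And>y. (f has_derivative (\<lambda>h. g y \<bullet> h)) (at y)"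
    and lip1: "\<And>y z. norm (g y - g z) \<le> L1 * norm (y - z)"
    and \<mu>: "0 < \<mu>"
  shows "\<bar>(f (x + \<mu> *\<^sub>R u) - f x) / \<mu> - g x \<bullet> u\<bar> \<le> L1 * \<mu> * (norm u)\<^sup>2 / 2"
proof -
  have "\<mu> * ((f (x + \<mu> *\<^sub>R u) - f x) / \<mu> - g x \<bullet> u) = f (x + \<mu> *\<^sub>R u) - f x - g x \<bullet> (\<mu> *\<^sub>R u)"
    using \<mu> by (simp add: field_simps)
  then have "\<mu> * \<bar>(f (x + \<mu> *\<^sub>R u) - f x) / \<mu> - g x \<bullet> u\<bar> = \<bar>f (x + \<mu> *\<^sub>R u) - f x - g x \<bullet> (\<mu> *\<^sub>R u)\<bar>"
    using \<mu> by (metis abs_mult abs_of_pos)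
  also have "\<dots> \<le> \<mu> * (L1 * \<mu> * (norm u)\<^sup>2 / 2)"
    using lipschitz_gradient_taylor_bound[OF grad lip1, of x "\<mu> *\<^sub>R u"] \<mu>
    by (simp add: power_mult_distrib power2_eq_square mult_ac)
  finally show ?thesis
    using \<mu> by simp
qed

lemma est_err_noise_expectation_bound:
  fixes f :: "'a::real_inner \<Rightarrow> real"
  assumes grad: "\<And>y. (f has_derivative (\<lambda>h. g y \<bullet> h)) (at y)"
    and lip0: "\<And>y z. \<bar>f y - f z\<bar> \<le> L0 * norm (y - z)"
    and lip1: "\<And>y z. norm (g y - g z) \<le> L1 * norm (y - z)"
    and \<mu>: "0 < \<mu>"
  shows "(((f (x + \<mu> *\<^sub>R u) - f x) / \<mu> - g x \<bullet> u)\<^sup>2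
            + ((f (x + \<mu> *\<^sub>R u))\<^sup>2 + (f x)\<^sup>2) / \<mu>\<^sup>2 * \<sigma>\<^sup>2) * (norm u)\<^sup>2
     \<le> L1\<^sup>2 * \<mu>\<^sup>2 / 4 * norm u ^ 6 + 3 * L0\<^sup>2 * \<sigma>\<^sup>2 * norm u ^ 4
        + 5 / 2 * \<sigma>\<^sup>2 * (f x)\<^sup>2 / \<mu>\<^sup>2 * norm u ^ 2"
proof -
  define A where "A = (f (x + \<mu> *\<^sub>R u) - f x) / \<mu> - g x \<bullet> u"
  define S where "S = (norm u)\<^sup>2"
  have A2: "A\<^sup>2 \<le> L1\<^sup>2 * \<mu>\<^sup>2 / 4 * S\<^sup>2"
    using power_mono[OF difference_quotient_error_bound[OF grad lip1 \<mu>, of x u] abs_ge_zero, of 2]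
    by (simp add: A_def S_def power_mult_distrib power_divide)
  have diff: "\<bar>f (x + \<mu> *\<^sub>R u) - f x\<bar> \<le> L0 * \<mu> * norm u"
    using lip0[of "x + \<mu> *\<^sub>R u" x] \<mu> by simp
  have "(f (x + \<mu> *\<^sub>R u) - f x)\<^sup>2 \<le> (L0 * \<mu> * norm u)\<^sup>2"
    using power_mono[OF diff abs_ge_zero, of 2] by simp
  then have "(f (x + \<mu> *\<^sub>R u))\<^sup>2 \<le> 3 / 2 * (f x)\<^sup>2 + 3 * L0\<^sup>2 * \<mu>\<^sup>2 * S"
    using square_add_le[of "f x" "f (x + \<mu> *\<^sub>R u) - f x"]
    by (simp add: S_def power_mult_distrib)
  then have "((f (x + \<mu> *\<^sub>R u))\<^sup>2 + (f x)\<^sup>2) / \<mu>\<^sup>2 \<le> (5 / 2 * (f x)\<^sup>2 + 3 * L0\<^sup>2 * \<mu>\<^sup>2 * S) / \<mu>\<^sup>2"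
    by (intro divide_right_mono) simp_all
  also have "\<dots> = 5 / 2 * (f x)\<^sup>2 / \<mu>\<^sup>2 + 3 * L0\<^sup>2 * S"
    using \<mu> by (simp add: field_simps)
  finally have B: "((f (x + \<mu> *\<^sub>R u))\<^sup>2 + (f x)\<^sup>2) / \<mu>\<^sup>2 \<le> 5 / 2 * (f x)\<^sup>2 / \<mu>\<^sup>2 + 3 * L0\<^sup>2 * S" .
  have "(A\<^sup>2 + ((f (x + \<mu> *\<^sub>R u))\<^sup>2 + (f x)\<^sup>2) / \<mu>\<^sup>2 * \<sigma>\<^sup>2) * S
      = A\<^sup>2 * S + ((f (x + \<mu> *\<^sub>R u))\<^sup>2 + (f x)\<^sup>2) / \<mu>\<^sup>2 * (\<sigma>\<^sup>2 * S)"
    by (simp add: algebra_simps)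
  also have "\<dots> \<le> L1\<^sup>2 * \<mu>\<^sup>2 / 4 * S\<^sup>2 * S + (5 / 2 * (f x)\<^sup>2 / \<mu>\<^sup>2 + 3 * L0\<^sup>2 * S) * (\<sigma>\<^sup>2 * S)"
    using A2 B by (intro add_mono mult_right_mono) (simp_all add: S_def)
  also have "\<dots> = L1\<^sup>2 * \<mu>\<^sup>2 / 4 * S ^ 3 + 3 * L0\<^sup>2 * \<sigma>\<^sup>2 * S\<^sup>2 + 5 / 2 * \<sigma>\<^sup>2 * (f x)\<^sup>2 / \<mu>\<^sup>2 * S"
    by (simp add: power2_eq_square power3_eq_cube algebra_simps)
  finally show ?thesis
    unfolding A_def S_def by (simp add: power_mult[symmetric])
qed

lemma smoothing_radius_squared:
  fixes n L1 \<sigma> :: real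
  assumes n: "0 \<le> n" and L1: "0 < L1" and \<sigma>: "0 < \<sigma>"
  shows "((16 * \<sigma>\<^sup>2 * n / (L1\<^sup>2 * (1 + 3 * \<sigma>\<^sup>2) * (n + 6) ^ 3)) powr (1 / 4))\<^sup>2
           * (L1 * sqrt (1 + 3 * \<sigma>\<^sup>2) * sqrt ((n + 6) ^ 3))
       = 4 * \<sigma> * sqrt n"
proof -
  define X where "X = 16 * \<sigma>\<^sup>2 * n / (L1\<^sup>2 * (1 + 3 * \<sigma>\<^sup>2) * (n + 6) ^ 3)"
  have "0 \<le> X"
    using n unfolding X_def by simp
  then have "(X powr (1 / 4))\<^sup>2 = sqrt X"
    by (simp add: power2_eq_square powr_add[symmetric] powr_half_sqrt)
  also have "sqrt X = 4 * \<sigma> * sqrt n / (L1 * sqrt (1 + 3 * \<sigma>\<^sup>2) * sqrt ((n + 6) ^ 3))"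
    using L1 \<sigma> unfolding X_def
    by (simp add: real_sqrt_divide real_sqrt_mult real_sqrt_abs)
  moreover have "0 < sqrt (1 + 3 * \<sigma>\<^sup>2)"
    by (simp add: add_pos_nonneg)
  ultimately show ?thesis
    using L1 n unfolding X_def[symmetric] by simp
qed

lemma smoothing_tradeoff_bound:
  fixes n L0 L1 \<sigma> F \<mu> :: real
  assumes n: "1 \<le> n" and L1: "0 < L1" and \<sigma>: "0 < \<sigma>" and F: "0 < F"
    and \<mu>: "\<mu>\<^sup>2 * (L1 * sqrt (1 + 3 * \<sigma>\<^sup>2) * sqrt ((n + 6) ^ 3)) = 4 * \<sigma> * sqrt n * F"
  shows "L1\<^sup>2 * \<mu>\<^sup>2 / 4 * (n * (n + 2) * (n + 4)) + 3 * L0\<^sup>2 * \<sigma>\<^sup>2 * (n * (n + 2))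
           + 5 / 2 * \<sigma>\<^sup>2 * F\<^sup>2 / \<mu>\<^sup>2 * n
     \<le> 2 * L1 * \<sigma> * sqrt ((1 + 3 * \<sigma>\<^sup>2) * n * (n + 6) ^ 3) * F + 3 * L0\<^sup>2 * \<sigma>\<^sup>2 * (n + 4)\<^sup>2"
proof -
  define s where "s = sqrt (1 + 3 * \<sigma>\<^sup>2)"
  define r where "r = sqrt n"
  define W where "W = sqrt ((n + 6) ^ 3)"
  have s: "1 \<le> s" "s\<^sup>2 = 1 + 3 * \<sigma>\<^sup>2"
    unfolding s_def by (simp_all add: add_nonneg_nonneg)
  have r: "0 < r" "r\<^sup>2 = n"
    unfolding r_def using n by simp_all
  have W: "0 < W" "W\<^sup>2 = (n + 6) ^ 3"
    unfolding W_def using n by simp_all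
  have "\<mu>\<^sup>2 * (L1 * s * W) = 4 * \<sigma> * r * F"
    using \<mu> unfolding s_def r_def W_def .
  then have \<mu>2: "\<mu>\<^sup>2 = 4 * \<sigma> * r * F / (L1 * s * W)"
    using L1 s W by (simp add: field_simps)
  have "L1\<^sup>2 * \<mu>\<^sup>2 / 4 * (n * (n + 2) * (n + 4)) \<le> L1\<^sup>2 * \<mu>\<^sup>2 / 4 * W\<^sup>2"
    using n W(2) by (intro mult_left_mono) (simp_all add: power3_eq_cube algebra_simps)
  also have "\<dots> = L1 * \<sigma> * r * W * F / s"
    using L1 s W unfolding \<mu>2 by (simp add: field_simps power2_eq_square)
  finally have gauss_term: "L1\<^sup>2 * \<mu>\<^sup>2 / 4 * (n * (n + 2) * (n + 4)) \<le> L1 * \<sigma> * r * W * F / s" .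
  have noise_term: "5 / 2 * \<sigma>\<^sup>2 * F\<^sup>2 / \<mu>\<^sup>2 * n = 5 / 8 * L1 * \<sigma> * s * r * W * F"
    using L1 s W r F \<sigma> unfolding \<mu>2 r(2)[symmetric] by (simp add: field_simps power2_eq_square)
  have "1 / s + 5 / 8 * s \<le> 2 * s"
    using s(1) mult_mono[OF s(1) s(1)] by (simp add: field_simps)
  then have "L1 * \<sigma> * r * W * F * (1 / s + 5 / 8 * s) \<le> L1 * \<sigma> * r * W * F * (2 * s)"
    using L1 \<sigma> r W F by (intro mult_left_mono) simp_all
  then have tradeoff: "L1 * \<sigma> * r * W * F / s + 5 / 8 * L1 * \<sigma> * s * r * W * F
      \<le> 2 * L1 * \<sigma> * (s * r * W) * F"
    by (simp add: algebra_simps)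
  have "n * (n + 2) \<le> (n + 4)\<^sup>2"
    using n by (simp add: power2_eq_square algebra_simps)
  then have lipschitz_term: "3 * L0\<^sup>2 * \<sigma>\<^sup>2 * (n * (n + 2)) \<le> 3 * L0\<^sup>2 * \<sigma>\<^sup>2 * (n + 4)\<^sup>2"
    by (rule mult_left_mono) simp
  have sqrt_eq: "sqrt ((1 + 3 * \<sigma>\<^sup>2) * n * (n + 6) ^ 3) = s * r * W"
    unfolding s_def r_def W_def by (simp add: real_sqrt_mult)
  show ?thesis
    unfolding sqrt_eq using gauss_term noise_term tradeoff lipschitz_term by linarith
qed

lemma est_err_expectation_le:
  fixes f :: "'a::euclidean_space \<Rightarrow> real" and g :: "'a \<Rightarrow> 'a" and D :: "real measure"
  defines "n \<equiv> real DIM('a)"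
  assumes grad: "\<And>y. (f has_derivative (\<lambda>h. g y \<bullet> h)) (at y)"
    and lip0: "\<And>y z. \<bar>f y - f z\<bar> \<le> L0 * norm (y - z)"
    and lip1: "\<And>y z. norm (g y - g z) \<le> L1 * norm (y - z)"
    and g_measurable: "g \<in> borel_measurable borel"
    and D: "prob_space D" "sets D = sets borel" "integrable D (\<lambda>v. v\<^sup>2)"
      "prob_space.expectation D (\<lambda>v. v) = 0" "prob_space.expectation D (\<lambda>v. v\<^sup>2) = \<sigma>\<^sup>2"
    and \<mu>: "0 < \<mu>"
  shows "(\<integral>\<^sup>+(u, v1, v2). ennreal (est_err f g x \<mu> u v1 v2) \<partial>(std_gaussian \<Otimes>\<^sub>M (D \<Otimes>\<^sub>M D)))
     \<le> ennreal (L1\<^sup>2 * \<mu>\<^sup>2 / 4 * (n * (n + 2) * (n + 4)) + 3 * L0\<^sup>2 * \<sigma>\<^sup>2 * (n * (n + 2))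
                + 5 / 2 * \<sigma>\<^sup>2 * (f x)\<^sup>2 / \<mu>\<^sup>2 * n)"
proof -
  have [measurable_cong]: "sets D = sets borel" by (fact D(2))
  have "continuous_on UNIV f"
    using grad has_derivative_continuous by (blast intro: continuous_at_imp_continuous_on)
  then have [measurable]: "f \<in> borel_measurable borel" "g \<in> borel_measurable borel"
    using g_measurable by (simp_all add: borel_measurable_continuous_onI)
  interpret DD: prob_space "D \<Otimes>\<^sub>M D"
    using D(1) D(1) by (rule prob_space_pair)
  define c where "c k = (if k = 1 then 5 / 2 * \<sigma>\<^sup>2 * (f x)\<^sup>2 / \<mu>\<^sup>2
                         else if k = 2 then 3 * L0\<^sup>2 * \<sigma>\<^sup>2 else L1\<^sup>2 * \<mu>\<^sup>2 / 4)" for k :: nat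
  have "(\<integral>\<^sup>+(u, v1, v2). ennreal (est_err f g x \<mu> u v1 v2) \<partial>(std_gaussian \<Otimes>\<^sub>M (D \<Otimes>\<^sub>M D)))
      = (\<integral>\<^sup>+u. (\<integral>\<^sup>+(v1, v2). ennreal (est_err f g x \<mu> u v1 v2) \<partial>(D \<Otimes>\<^sub>M D)) \<partial>(std_gaussian :: 'a measure))"
    by (subst DD.nn_integral_fst[symmetric]) (auto simp: est_err_def case_prod_beta')
  also have "\<dots> = (\<integral>\<^sup>+u. ennreal ((((f (x + \<mu> *\<^sub>R u) - f x) / \<mu> - g x \<bullet> u)\<^sup>2
                   + ((f (x + \<mu> *\<^sub>R u))\<^sup>2 + (f x)\<^sup>2) / \<mu>\<^sup>2 * \<sigma>\<^sup>2) * (norm u)\<^sup>2) \<partial>(std_gaussian :: 'a measure))"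
    using \<mu> by (simp add: est_err_noise_expectation[OF D])
  also have "\<dots> \<le> (\<integral>\<^sup>+u. ennreal (\<Sum>k\<in>{1, 2, 3}. c k * norm u ^ (2 * k)) \<partial>(std_gaussian :: 'a measure))"
    by (intro nn_integral_mono ennreal_leI order_trans[OF est_err_noise_expectation_bound[OF grad lip0 lip1 \<mu>]])
       (simp add: c_def)
  also have "\<dots> = ennreal (\<Sum>k\<in>{1, 2, 3}. c k * (\<Prod>j<k. n + 2 * real j))"
    unfolding n_def by (rule nn_integral_std_gaussian_norm_poly) (auto simp: c_def)
  finally show ?thesis
    by (simp add: c_def numeral_eq_Suc algebra_simps)
qed

theorem theorem3:
  fixes f :: "'a::euclidean_space \<Rightarrow> real" and g :: "'a \<Rightarrow> 'a"
    and D :: "real measure" and L0 L1 \<sigma> a b :: real and x :: 'a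
  assumes conv: "convex_on UNIV f"
    and grad: "\<And>y. (f has_derivative (\<lambda>h. g y \<bullet> h)) (at y)"
    and grad_cont: "continuous_on UNIV g"
    and lip0: "\<And>y z. \<bar>f y - f z\<bar> \<le> L0 * norm (y - z)"
    and lip1: "\<And>y z. norm (g y - g z) \<le> L1 * norm (y - z)"
    and L1_pos: "L1 > 0"
    and D_prob: "prob_space D" and D_sets: "sets D = sets borel"
    and supp: "AE v in D. \<bar>v\<bar> \<le> a" and a_lt: "a < 1"
    and mean: "prob_space.expectation D (\<lambda>v. v) = 0"
    and var: "prob_space.variance D (\<lambda>v. v) = \<sigma>\<^sup>2" and \<sigma>_pos: "\<sigma> > 0"
    and inv_bound: "prob_space.expectation D (\<lambda>v. 1 / (1 + v)) \<le> b"
    and fx: "f x \<noteq> 0"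
  shows
    "(let n = real DIM('a);
          C4 = (16 * \<sigma>\<^sup>2 * n / (L1\<^sup>2 * (1 + 3 * \<sigma>\<^sup>2) * (n + 6) ^ 3)) powr (1 / 4);
          \<mu> = C4 * sqrt \<bar>f x\<bar>
      in (\<integral>\<^sup>+ (u, v1, v2). ennreal (est_err f g x \<mu> u v1 v2)
             \<partial>(std_gaussian \<Otimes>\<^sub>M (D \<Otimes>\<^sub>M D)))
         \<le> ennreal (2 * L1 * \<sigma> * sqrt ((1 + 3 * \<sigma>\<^sup>2) * n * (n + 6) ^ 3) * \<bar>f x\<bar>
                    + 3 * L0\<^sup>2 * \<sigma>\<^sup>2 * (n + 4)\<^sup>2))"
proof -
  define n where "n = real DIM('a)"
  define C4 where "C4 = (16 * \<sigma>\<^sup>2 * n / (L1\<^sup>2 * (1 + 3 * \<sigma>\<^sup>2) * (n + 6) ^ 3)) powr (1 / 4)"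
  define \<mu> where "\<mu> = C4 * sqrt \<bar>f x\<bar>"
  have n: "1 \<le> n"
    unfolding n_def by (simp add: Suc_le_eq)
  have "0 < 1 + 3 * \<sigma>\<^sup>2"
    by (simp add: add_pos_nonneg)
  then have "0 < C4"
    unfolding C4_def using n L1_pos \<sigma>_pos by simp
  then have \<mu>_pos: "0 < \<mu>"
    unfolding \<mu>_def using fx by simp
  have moments: "integrable D (\<lambda>v. v\<^sup>2)" "prob_space.expectation D (\<lambda>v. v\<^sup>2) = \<sigma>\<^sup>2"
    using variance_imp_square_integrable[OF mean var] \<sigma>_pos by simp_all
  note expectation_le = est_err_expectation_le[OF grad lip0 lip1
      borel_measurable_continuous_onI[OF grad_cont] D_prob D_sets moments(1) mean moments(2) \<mu>_pos]
  have "\<mu>\<^sup>2 * (L1 * sqrt (1 + 3 * \<sigma>\<^sup>2) * sqrt ((n + 6) ^ 3)) = 4 * \<sigma> * sqrt n * \<bar>f x\<bar>"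
    using smoothing_radius_squared[of n L1 \<sigma>] n L1_pos \<sigma>_pos
    unfolding \<mu>_def C4_def by (simp add: power_mult_distrib mult_ac)
  from smoothing_tradeoff_bound[OF n L1_pos \<sigma>_pos _ this] fx
  have "L1\<^sup>2 * \<mu>\<^sup>2 / 4 * (n * (n + 2) * (n + 4)) + 3 * L0\<^sup>2 * \<sigma>\<^sup>2 * (n * (n + 2))
          + 5 / 2 * \<sigma>\<^sup>2 * (f x)\<^sup>2 / \<mu>\<^sup>2 * n
      \<le> 2 * L1 * \<sigma> * sqrt ((1 + 3 * \<sigma>\<^sup>2) * n * (n + 6) ^ 3) * \<bar>f x\<bar> + 3 * L0\<^sup>2 * \<sigma>\<^sup>2 * (n + 4)\<^sup>2"
    by simp
  with expectation_le show ?thesis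
    unfolding Let_def n_def[symmetric] C4_def[symmetric] \<mu>_def[symmetric]
    by (blast intro: order_trans ennreal_leI)
qed

end
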